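(* Let $\rho_0,\rho_1\in\mathcal{P}(\mathbb{R}^n)\cap L^\infty(\mathbb{R}^n)$ be radially decreasing and compactly supported, and let $\{\rho_t\}_{t\in[0,1]}$ be the height-function interpolation curve between them. Then: (a) writing $\mathrm{supp}\,\rho_i=B_{R_i}$ for $i=0,1$, for all $t\in(0,1)$ one has $\mathrm{supp}\,\rho_t=B_{R_t}$ with $R_t=((1-t)R_0^{-n}+tR_1^{-n})^{-1/n}$; in particular $R_t\le\max\{R_0,R_1\}$ for $t\in[0,1]$; (b) if $\rho_0,\rho_1$ are both strictly radially decreasing within their supports, then so is $\rho_t$ for every $t\in(0,1)$; (c) if $\rho_0,\rho_1\in C(\mathbb{R}^n)$, then $\rho_t\in C(\mathbb{R}^n)$ for every $t\in(0,1)$.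
   Context: Radially decreasing = radially symmetric about the origin and nonincreasing in $|x|$; $B_R=B(0,R)$. Height function of such $\rho$: $h:(0,1)\to(0,\|\rho\|_\infty)$ with $\int\min\{\rho(x),h(s)\}dx=s$. Interpolation curve: $h_t=(1-t)h_0+th_1$ and $\rho_t(x)=\int_0^1\chi_{(c_nh_t'(s))^{-1/n}}(x)\,h_t'(s)\,ds$ with $c_n$ the volume of the unit ball and $\chi_r=1_{B(0,r)}$. *)

theory Defs
  imports "HOL-Analysis.Analysis"
begin

definition radially_decreasing :: "('a::euclidean_space \<Rightarrow> real) \<Rightarrow> bool" where
  "radially_decreasing \<rho> \<longleftrightarrow>
     (\<forall>x y. norm x = norm y \<longrightarrow> \<rho> x = \<rho> y) \<and>
     (\<forall>x y. norm x \<le> norm y \<longrightarrow> \<rho> y \<le> \<rho> x)"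

definition supp :: "('a::euclidean_space \<Rightarrow> real) \<Rightarrow> 'a set" where
  "supp \<rho> = closure {x. \<rho> x \<noteq> 0}"

definition strictly_radially_decreasing_on_supp :: "('a::euclidean_space \<Rightarrow> real) \<Rightarrow> bool" where
  "strictly_radially_decreasing_on_supp \<rho> \<longleftrightarrow>
     (\<forall>x y. norm x < norm y \<longrightarrow> y \<in> supp \<rho> \<longrightarrow> \<rho> y < \<rho> x)"

definition prob_density :: "('a::euclidean_space \<Rightarrow> real) \<Rightarrow> bool" where
  "prob_density \<rho> \<longleftrightarrow> (\<forall>x. 0 \<le> \<rho> x) \<and> integrable lborel \<rho> \<and> (LINT x|lborel. \<rho> x) = 1"

definition ess_bounded :: "('a::euclidean_space \<Rightarrow> real) \<Rightarrow> bool" where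
  "ess_bounded \<rho> \<longleftrightarrow> (\<exists>M. AE x in lborel. \<bar>\<rho> x\<bar> \<le> M)"

definition height :: "('a::euclidean_space \<Rightarrow> real) \<Rightarrow> real \<Rightarrow> real" where
  "height \<rho> s = (THE l. 0 < l \<and> (LINT x|lborel. min (\<rho> x) l) = s)"

definition interp_curve ::
  "('a::euclidean_space \<Rightarrow> real) \<Rightarrow> ('a \<Rightarrow> real) \<Rightarrow> real \<Rightarrow> 'a \<Rightarrow> real" where
  "interp_curve \<rho>0 \<rho>1 t x =
     (let ht = (\<lambda>s. (1 - t) * height \<rho>0 s + t * height \<rho>1 s);
          cn = measure lborel (ball 0 1 :: 'a set);
          n = real DIM('a)
      in LINT s:{0<..<1}|lborel.
           indicator (ball (0::'a) ((cn * deriv ht s) powr (-1 / n))) x * deriv ht s)"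

end

theory Submission
  imports Defs "HOL-Probability.Distribution_Functions"
begin

(*
  The height function h of a radial density rho inverts the truncated mass
  F(l) = int min(rho, l), whose derivative is mu(l) = |{rho > l}| at every level where mu is
  continuous, i.e. off a countable set. Hence h' = 1/mu(h) almost everywhere, and rho_t is the
  superposition rho_t(x) = int_0^1 1{|x| < r(s)} g(s) ds of centred balls of radii
  r(s) = (c_n g(s))^(-1/n), with the weight g = (1-t)/mu_0(h_0) + t/mu_1(h_1). This weight is
  nondecreasing, integrable and tends to (1-t)/|B_R0| + t/|B_R1| as s -> 0, so the support of
  rho_t is the ball of the largest radius r(0+) = R_t. If both rho_i are strictly decreasing,
  their level sets are null and their superlevel sets shrink to the origin, so g is continuous
  and unbounded: every radius below R_t is the radius of the balls for an interval of s, which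
  makes rho_t strictly decreasing. If both rho_i are continuous, each mu_i is strictly
  decreasing, so g is strictly increasing, every radius occurs for at most one s, and dominated
  convergence makes rho_t continuous.
*)

section \<open>Integrals over intervals\<close>

lemma set_integrable_of_integrable_on_nonneg:
  fixes f :: "'a::euclidean_space \<Rightarrow> real"
  assumes f: "f integrable_on S" and nonneg: "\<And>x. x \<in> S \<Longrightarrow> 0 \<le> f x"
    and meas: "set_borel_measurable lborel S f"
  shows "set_integrable lborel S f"
  using nonnegative_absolutely_integrable_1[OF f nonneg] meas
  unfolding set_integrable_def set_borel_measurable_def by (simp add: integrable_completion)

lemma set_integrable_einterval_of_bounded_integrals:
  fixes f :: "real \<Rightarrow> real" and a b :: ereal
  assumes "a < b"
    and nonneg: "\<And>x. x \<in> einterval a b \<Longrightarrow> 0 \<le> f x"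
    and meas: "set_borel_measurable lborel (einterval a b) f"
    and bounded: "\<And>c d. a < c \<Longrightarrow> c < d \<Longrightarrow> d < b \<Longrightarrow> f integrable_on {c..d} \<and> integral {c..d} f \<le> C"
  shows "set_integrable lborel (einterval a b) f"
proof -
  obtain u l :: "nat \<Rightarrow> real" where approx:
    "einterval a b = (\<Union>i. {l i .. u i})" "incseq u" "decseq l" "\<And>i. l i < u i"
    "\<And>i. a < l i" "\<And>i. u i < b" "l \<longlonglongrightarrow> a" "u \<longlonglongrightarrow> b"
    by (rule einterval_Icc_approximation[OF \<open>a < b\<close>]) (rule that)
  have sub: "x \<in> einterval a b" if "x \<in> {l i..u i}" for i x
    unfolding approx(1) using that by (rule UN_I[OF UNIV_I])
  have nonneg_Icc: "0 \<le> f x" if "x \<in> {l i..u i}" for i x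
    using that by (intro nonneg sub)
  have bnd: "f integrable_on {l i..u i}" "integral {l i..u i} f \<le> C" for i
    using bounded[OF approx(5,4,6)] by auto
  have int: "set_integrable lborel {l i..u i} f" for i
  proof (rule set_integrable_of_integrable_on_nonneg[OF bnd(1) nonneg_Icc])
    have "(\<lambda>x. indicator {l i..u i} x *\<^sub>R f x) =
        (\<lambda>x. indicator {l i..u i} x *\<^sub>R (indicator (einterval a b) x *\<^sub>R f x))"
      using sub by (intro ext) (simp split: split_indicator)
    then show "set_borel_measurable lborel {l i..u i} f"
      unfolding set_borel_measurable_def
      by (simp only:) (rule borel_measurable_scaleR[OF borel_measurable_indicator
            meas[unfolded set_borel_measurable_def]], simp)
  qed
  have "integral {l i..u i} f \<le> integral {l j..u j} f" if "i \<le> j" for i j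
  proof (rule integral_subset_le[OF _ bnd(1) bnd(1)])
    show "{l i..u i} \<subseteq> {l j..u j}"
      using incseqD[OF approx(2) that] decseqD[OF approx(3) that] by auto
  qed (use nonneg_Icc in blast)
  then have "incseq (\<lambda>i. integral {l i..u i} f)"
    by (rule monoI)
  then obtain L where "(\<lambda>i. integral {l i..u i} f) \<longlonglongrightarrow> L"
    by (rule incseq_convergent[of _ C]) (use bnd(2) that in auto)
  moreover have "(LBINT x=l i..u i. f x) = integral {l i..u i} f" for i
    using approx(4)[of i] int by (intro interval_integral_eq_integral) (auto simp: less_imp_le)
  ultimately show ?thesis
    using interval_integral_Icc_approx_nonneg(1)[OF \<open>a < b\<close> approx int _ meas] nonneg
    by (simp add: einterval_iff)
qed

lemma integral_le_of_forward_difference: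
  fixes f H :: "real \<Rightarrow> real"
  assumes ab: "a + d \<le> b" and d: "0 < d"
    and f: "f integrable_on {a..b}"
    and H: "continuous_on {a..b + d} H" "mono_on {a..b + d} H"
    and diff: "\<And>s. s \<in> {a..b} \<Longrightarrow> d * f s \<le> H (s + d) - H s"
  shows "integral {a..b} f \<le> H (b + d) - H a"
proof -
  have Hi: "H integrable_on {u..v}" if "a \<le> u" "v \<le> b + d" for u v
    by (rule integrable_continuous_interval, rule continuous_on_subset[OF H(1)]) (use that in auto)
  have Hab: "H integrable_on {a..b}"
    using ab d by (intro Hi) auto
  have shift: "(\<lambda>s. H (s + d)) integrable_on {a..b}"
    "integral {a..b} (\<lambda>s. H (s + d)) = integral {a + d..b + d} H"
    using integrable_shift_real_ivl[OF Hi[of "a + d" "b + d"], of d]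
      integral_shift_real_ivl[where a="a + d" and c=d and b="b + d" and f=H] d by simp_all
  have split: "integral {a + d..b + d} H = integral {a + d..b} H + integral {b..b + d} H"
    "integral {a..b} H = integral {a..a + d} H + integral {a + d..b} H"
    using Henstock_Kurzweil_Integration.integral_combine[of "a + d" b "b + d" H]
      Henstock_Kurzweil_Integration.integral_combine[of a "a + d" b H] Hi[of "a + d" "b + d"] Hab ab d
    by simp_all
  have H_bounds: "integral {b..b + d} H \<le> d * H (b + d)" "d * H a \<le> integral {a..a + d} H"
    using integral_le[OF Hi[of b "b + d"] integrable_const_ivl, of "H (b + d)"]
      integral_le[OF integrable_const_ivl Hi[of a "a + d"], of "H a"]
      mono_onD[OF H(2)] ab d by auto
  have "d * integral {a..b} f = integral {a..b} (\<lambda>s. d * f s)"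
    by (rule integral_mult[OF f])
  also have "\<dots> \<le> integral {a..b} (\<lambda>s. H (s + d) - H s)"
    using diff integrable_on_cmult_left[OF f, of d] by (intro integral_le integrable_diff shift(1) Hab) auto
  also have "\<dots> = integral {b..b + d} H - integral {a..a + d} H"
    using integral_diff[OF shift(1) Hab] shift(2) split by simp
  also have "\<dots> \<le> d * (H (b + d) - H a)"
    using H_bounds by (simp add: algebra_simps)
  finally show ?thesis
    using d by simp
qed

section \<open>Distribution function and height of a radial density\<close>

lemma measure_ball_tendsto_0: "((\<lambda>r. measure lborel (ball (0::'a::euclidean_space) r)) \<longlongrightarrow> 0) (at_right 0)"
proof (rule Lim_transform_eventually)
  have "((\<lambda>r. unit_ball_vol (real DIM('a)) * r ^ DIM('a))
      \<longlongrightarrow> unit_ball_vol (real DIM('a)) * 0 ^ DIM('a)) (at_right 0)"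
    by (intro tendsto_intros)
  then show "((\<lambda>r. unit_ball_vol (real DIM('a)) * r ^ DIM('a)) \<longlongrightarrow> 0) (at_right 0)"
    using DIM_positive[where 'a='a] by (simp add: power_0_left)
  show "\<forall>\<^sub>F r in at_right 0. unit_ball_vol (real DIM('a)) * r ^ DIM('a) = measure lborel (ball (0::'a) r)"
    by (simp add: eventually_at_right_less[THEN eventually_mono] content_ball)
qed

definition superlevel_measure :: "('a::euclidean_space \<Rightarrow> real) \<Rightarrow> real \<Rightarrow> real" where
  "superlevel_measure \<rho> l = measure lborel {x. l < \<rho> x}"

definition truncated_mass :: "('a::euclidean_space \<Rightarrow> real) \<Rightarrow> real \<Rightarrow> real" where
  "truncated_mass \<rho> l = (LINT x|lborel. min (\<rho> x) l)"

definition height_slope :: "('a::euclidean_space \<Rightarrow> real) \<Rightarrow> real \<Rightarrow> real" where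
  "height_slope \<rho> s = 1 / superlevel_measure \<rho> (height \<rho> s)"

lemma height_eq_inverse_truncated_mass: "height \<rho> s = (THE l. 0 < l \<and> truncated_mass \<rho> l = s)"
  unfolding height_def truncated_mass_def ..

locale radial_density =
  fixes \<rho> :: "'a::euclidean_space \<Rightarrow> real" and R :: real
  assumes density: "prob_density \<rho>"
    and radial: "radially_decreasing \<rho>"
    and supp_eq: "supp \<rho> = cball 0 R"
begin

lemma density_nonneg: "0 \<le> \<rho> x"
  and density_integrable: "integrable lborel \<rho>"
  and density_total_mass: "(LINT x|lborel. \<rho> x) = 1"
  using density unfolding prob_density_def by auto

lemma borel_measurable_density[measurable]: "\<rho> \<in> borel_measurable lborel"
  using density_integrable by auto

lemma density_antimono: "norm x \<le> norm y \<Longrightarrow> \<rho> y \<le> \<rho> x"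
  using radial unfolding radially_decreasing_def by blast

lemma density_le_origin: "\<rho> x \<le> \<rho> 0"
  by (rule density_antimono) simp

lemma density_eq_0_outside: "R < norm x \<Longrightarrow> \<rho> x = 0"
  using closure_subset[of "{x. \<rho> x \<noteq> 0}"] supp_eq unfolding supp_def by force

lemma radius_pos: "0 < R"
proof (rule ccontr)
  assume "\<not> 0 < R"
  then have "\<rho> x = 0" if "x \<noteq> 0" for x
    using that by (intro density_eq_0_outside) (metis not_less order.strict_trans1 zero_less_norm_iff)
  then have "AE x in lborel. \<rho> x = 0"
    by (intro AE_I'[of "{0}"]) auto
  then have "(LINT x|lborel. \<rho> x) = 0"
    by (simp add: integral_eq_zero_AE)
  with density_total_mass show False by simp
qed

lemma density_pos_in_ball:
  assumes x: "norm x < R"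
  shows "0 < \<rho> x"
proof -
  obtain w :: 'a where w: "norm w = R"
    using vector_choose_size[of R] radius_pos by auto
  then have "w \<in> closure {x. \<rho> x \<noteq> 0}"
    using supp_eq unfolding supp_def by auto
  then obtain y where y: "\<rho> y \<noteq> 0" "dist y w < R - norm x"
    using x unfolding closure_approachable by (metis diff_gt_0_iff_gt mem_Collect_eq)
  have "norm w \<le> norm y + dist y w"
    using norm_triangle_sub[of w y] by (simp add: dist_norm norm_minus_commute)
  then have "\<rho> y \<le> \<rho> x"
    using y w by (intro density_antimono) linarith
  with y density_nonneg[of y] show ?thesis by linarith
qed

lemma superlevel_subset_cball: "0 \<le> l \<Longrightarrow> {x. l < \<rho> x} \<subseteq> cball 0 R"
  using density_eq_0_outside by (force simp: not_le[symmetric])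

lemma superlevel_subset_ball:
  assumes "\<rho> w < l"
  shows "{x. l < \<rho> x} \<subseteq> ball 0 (norm w)"
proof
  fix x
  assume "x \<in> {x. l < \<rho> x}"
  with assms have "\<rho> w < \<rho> x"
    by simp
  show "x \<in> ball 0 (norm w)"
  proof (rule ccontr)
    assume "x \<notin> ball 0 (norm w)"
    then have "\<rho> x \<le> \<rho> w"
      by (intro density_antimono) simp
    with \<open>\<rho> w < \<rho> x\<close> show False
      by simp
  qed
qed

lemma superlevel_fmeasurable: "0 \<le> l \<Longrightarrow> {x. l < \<rho> x} \<in> fmeasurable lborel"
  by (rule fmeasurableI2[OF fmeasurable_compact superlevel_subset_cball]) auto

lemma superlevel_measure_le: "0 \<le> l \<Longrightarrow> superlevel_measure \<rho> l \<le> measure lborel (ball (0::'a) R)"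
  unfolding superlevel_measure_def
  using measure_mono_fmeasurable[OF superlevel_subset_cball _ fmeasurable_compact] radius_pos
  by (simp add: content_ball content_cball)

lemma superlevel_measure_antimono:
  "0 \<le> l \<Longrightarrow> l \<le> l' \<Longrightarrow> superlevel_measure \<rho> l' \<le> superlevel_measure \<rho> l"
  unfolding superlevel_measure_def
  by (rule measure_mono_fmeasurable[OF _ _ superlevel_fmeasurable]) auto

lemma superlevel_measure_0: "superlevel_measure \<rho> 0 = measure lborel (ball (0::'a) R)"
proof (rule antisym)
  have "ball 0 R \<subseteq> {x. 0 < \<rho> x}"
    using density_pos_in_ball by auto
  then show "measure lborel (ball (0::'a) R) \<le> superlevel_measure \<rho> 0"
    unfolding superlevel_measure_def
    by (rule measure_mono_fmeasurable) (auto intro: superlevel_fmeasurable)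
qed (rule superlevel_measure_le, simp)

lemma integrable_truncated: "0 \<le> l \<Longrightarrow> integrable lborel (\<lambda>x. min (\<rho> x) l)"
  by (rule Bochner_Integration.integrable_bound[OF density_integrable]) (auto simp: density_nonneg)

lemma truncated_mass_0: "truncated_mass \<rho> 0 = 0"
proof -
  have "min (\<rho> x) 0 = 0" for x
    using density_nonneg[of x] by (rule min_absorb2)
  then show ?thesis
    unfolding truncated_mass_def by simp
qed

lemma truncated_mass_eq_1: "\<rho> 0 \<le> l \<Longrightarrow> truncated_mass \<rho> l = 1"
proof -
  assume "\<rho> 0 \<le> l"
  then have "(\<lambda>x. min (\<rho> x) l) = \<rho>"
    using density_le_origin by (intro ext min_absorb1) (rule order_trans)
  then show ?thesis
    unfolding truncated_mass_def using density_total_mass by simp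
qed

lemma truncated_mass_le_1: "0 \<le> l \<Longrightarrow> truncated_mass \<rho> l \<le> 1"
  unfolding truncated_mass_def using density_total_mass integral_mono[OF integrable_truncated density_integrable]
  by simp

lemma truncated_mass_mono: "0 \<le> l \<Longrightarrow> l \<le> l' \<Longrightarrow> truncated_mass \<rho> l \<le> truncated_mass \<rho> l'"
  unfolding truncated_mass_def by (rule integral_mono[OF integrable_truncated integrable_truncated]) auto

lemma truncated_mass_increment_le:
  assumes "0 \<le> l" "l \<le> l'"
  shows "truncated_mass \<rho> l' - truncated_mass \<rho> l \<le> (l' - l) * superlevel_measure \<rho> l"
proof -
  have ind: "integrable lborel (indicator {x. l < \<rho> x} :: 'a \<Rightarrow> real)"
    using superlevel_fmeasurable[OF assms(1)] by (simp add: fmeasurable_def)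
  have "truncated_mass \<rho> l' - truncated_mass \<rho> l = (LINT x|lborel. min (\<rho> x) l' - min (\<rho> x) l)"
    unfolding truncated_mass_def using integrable_truncated assms by simp
  also have "\<dots> \<le> (LINT x|lborel. (l' - l) * indicator {x. l < \<rho> x} x)"
    using assms by (intro integral_mono Bochner_Integration.integrable_diff integrable_truncated
        integrable_mult_right ind) (auto simp: indicator_def min_def)
  also have "\<dots> = (l' - l) * superlevel_measure \<rho> l"
    unfolding superlevel_measure_def by simp
  finally show ?thesis .
qed

lemma continuous_on_truncated_mass: "continuous_on {0..} (truncated_mass \<rho>)"
proof (rule lipschitz_on_continuous_on, rule lipschitz_onI)
  fix l l' :: real
  assume l: "l \<in> {0..}" "l' \<in> {0..}"
  have *: "\<bar>truncated_mass \<rho> b - truncated_mass \<rho> a\<bar> \<le> measure lborel (ball (0::'a) R) * (b - a)"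
    if "0 \<le> a" "a \<le> b" for a b
  proof -
    have "truncated_mass \<rho> b - truncated_mass \<rho> a \<le> (b - a) * superlevel_measure \<rho> a"
      by (rule truncated_mass_increment_le[OF that])
    also have "\<dots> \<le> (b - a) * measure lborel (ball (0::'a) R)"
      using superlevel_measure_le[OF that(1)] that by (intro mult_left_mono) auto
    finally show ?thesis
      using truncated_mass_mono[OF that] by (simp add: mult.commute)
  qed
  show "dist (truncated_mass \<rho> l) (truncated_mass \<rho> l') \<le> measure lborel (ball (0::'a) R) * dist l l'"
    using *[of l l'] *[of l' l] l by (cases "l \<le> l'") (auto simp: dist_real_def abs_minus_commute)
qed simp

lemma truncated_mass_eq_1_iff:
  assumes "0 \<le> l"
  shows "truncated_mass \<rho> l = 1 \<longleftrightarrow> (AE x in lborel. \<rho> x \<le> l)"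
proof -
  have "truncated_mass \<rho> l = 1 \<longleftrightarrow> (LINT x|lborel. \<rho> x - min (\<rho> x) l) = 0"
    using integrable_truncated[OF assms] density_integrable density_total_mass unfolding truncated_mass_def by auto
  also have "\<dots> \<longleftrightarrow> (AE x in lborel. \<rho> x - min (\<rho> x) l = 0)"
    using integrable_truncated[OF assms] density_integrable by (intro integral_nonneg_eq_0_iff_AE) auto
  also have "\<dots> \<longleftrightarrow> (AE x in lborel. \<rho> x \<le> l)"
    by (intro AE_cong) auto
  finally show ?thesis .
qed

lemma truncated_mass_less_1_iff:
  assumes "0 \<le> l"
  shows "truncated_mass \<rho> l < 1 \<longleftrightarrow> 0 < superlevel_measure \<rho> l"
proof -
  have "truncated_mass \<rho> l < 1 \<longleftrightarrow> \<not> (AE x in lborel. \<rho> x \<le> l)"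
    using truncated_mass_le_1[OF assms] truncated_mass_eq_1_iff[OF assms] by auto
  also have "(AE x in lborel. \<rho> x \<le> l) \<longleftrightarrow> emeasure lborel {x. l < \<rho> x} = 0"
    by (rule AE_iff_measurable) auto
  also have "emeasure lborel {x. l < \<rho> x} = superlevel_measure \<rho> l"
    unfolding superlevel_measure_def by (rule emeasure_eq_measure2[OF superlevel_fmeasurable[OF assms]])
  finally show ?thesis
    using measure_nonneg[of lborel] by (auto simp: superlevel_measure_def less_le)
qed

lemma truncated_mass_strict_mono:
  assumes l: "0 \<le> l" "l < l'" and less_1: "truncated_mass \<rho> l < 1"
  shows "truncated_mass \<rho> l < truncated_mass \<rho> l'"
proof (rule ccontr)
  assume "\<not> ?thesis"
  then have "(LINT x|lborel. min (\<rho> x) l' - min (\<rho> x) l) = 0"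
    using truncated_mass_mono[of l l'] l integrable_truncated[of l] integrable_truncated[of l']
    unfolding truncated_mass_def by simp
  then have "AE x in lborel. min (\<rho> x) l' - min (\<rho> x) l = 0"
    using integrable_truncated[of l] integrable_truncated[of l'] l
    by (subst (asm) integral_nonneg_eq_0_iff_AE) auto
  then have "AE x in lborel. \<rho> x \<le> l"
    by eventually_elim (use l in \<open>auto simp: min_def split: if_splits\<close>)
  with less_1 truncated_mass_eq_1_iff[OF l(1)] show False by simp
qed

lemma truncated_mass_pos: "0 < l \<Longrightarrow> 0 < truncated_mass \<rho> l"
  using truncated_mass_strict_mono[of 0 l] truncated_mass_0 by simp

lemma truncated_mass_linearization_error:
  assumes l: "0 < l" and y: "\<bar>y - l\<bar> < l"
  shows "\<bar>truncated_mass \<rho> y - truncated_mass \<rho> l - (y - l) * superlevel_measure \<rho> l\<bar>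
    \<le> \<bar>y - l\<bar> * (superlevel_measure \<rho> (l - \<bar>y - l\<bar>) - superlevel_measure \<rho> (l + \<bar>y - l\<bar>))"
proof -
  define e where "e = \<bar>y - l\<bar>"
  define A B L where "A = {x. l - e < \<rho> x}" and "B = {x. l + e < \<rho> x}" and "L = {x. l < \<rho> x}"
  have e: "0 \<le> e" "e < l" "0 \<le> y"
    using y by (auto simp: e_def)
  have ind: "integrable lborel (indicator S :: 'a \<Rightarrow> real)" if "S \<in> {A, B, L}" for S
    using that superlevel_fmeasurable e unfolding A_def B_def L_def by (auto simp: fmeasurable_def)
  \<comment> \<open>The linearization is exact unless \<open>\<rho> x\<close> lies within \<open>e\<close> of \<open>l\<close>.\<close>
  have pointwise: "\<bar>min (\<rho> x) y - min (\<rho> x) l - (y - l) * indicator L x\<bar>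
      \<le> e * (indicator A x - indicator B x)" for x
    unfolding A_def B_def L_def e_def indicator_def of_bool_def
    by (cases "l < \<rho> x"; cases "y \<le> \<rho> x"; cases "y \<le> l") (auto simp: min_def abs_if)
  have "superlevel_measure \<rho> l = measure lborel L"
    unfolding superlevel_measure_def L_def ..
  then have "truncated_mass \<rho> y - truncated_mass \<rho> l - (y - l) * superlevel_measure \<rho> l =
      (LINT x|lborel. min (\<rho> x) y - min (\<rho> x) l - (y - l) * indicator L x)"
    unfolding truncated_mass_def
    using integrable_truncated[of y] integrable_truncated[of l] ind[of L] e l by simp
  also have "\<bar>\<dots>\<bar> \<le> (LINT x|lborel. \<bar>min (\<rho> x) y - min (\<rho> x) l - (y - l) * indicator L x\<bar>)"
    by (rule integral_abs_bound)
  also have "\<dots> \<le> (LINT x|lborel. e * (indicator A x - indicator B x))"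
    using integrable_truncated[of y] integrable_truncated[of l] ind e l pointwise
    by (intro integral_mono) auto
  also have "\<dots> = e * (measure lborel A - measure lborel B)"
    using ind by simp
  finally show ?thesis
    unfolding e_def A_def B_def superlevel_measure_def .
qed

lemma truncated_mass_has_derivative:
  assumes l: "0 < l" and cont: "isCont (superlevel_measure \<rho>) l"
  shows "(truncated_mass \<rho> has_field_derivative superlevel_measure \<rho> l) (at l)"
proof -
  let ?\<mu> = "superlevel_measure \<rho>"
  have "((\<lambda>y. ?\<mu> (l - \<bar>y - l\<bar>) - ?\<mu> (l + \<bar>y - l\<bar>)) \<longlongrightarrow> ?\<mu> (l - \<bar>l - l\<bar>) - ?\<mu> (l + \<bar>l - l\<bar>)) (at l)"
    using cont by (intro tendsto_intros isCont_tendsto_compose[where g="?\<mu>"])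
      (auto intro!: tendsto_eq_intros)
  then have lim0: "((\<lambda>y. ?\<mu> (l - \<bar>y - l\<bar>) - ?\<mu> (l + \<bar>y - l\<bar>)) \<longlongrightarrow> 0) (at l)"
    by simp
  have "\<forall>\<^sub>F y in at l. y \<noteq> l \<and> \<bar>y - l\<bar> < l"
    using l unfolding eventually_at by (intro exI[of _ l]) (auto simp: dist_real_def)
  then have "\<forall>\<^sub>F y in at l. norm ((truncated_mass \<rho> y - truncated_mass \<rho> l) / (y - l) - ?\<mu> l)
      \<le> ?\<mu> (l - \<bar>y - l\<bar>) - ?\<mu> (l + \<bar>y - l\<bar>)"
  proof eventually_elim
    case (elim y)
    then have "\<bar>(truncated_mass \<rho> y - truncated_mass \<rho> l) / (y - l) - ?\<mu> l\<bar>
        = \<bar>truncated_mass \<rho> y - truncated_mass \<rho> l - (y - l) * ?\<mu> l\<bar> / \<bar>y - l\<bar>"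
      by (simp add: field_simps abs_div)
    with truncated_mass_linearization_error[OF l, of y] elim show ?case
      by (simp add: divide_le_eq mult.commute)
  qed
  then have "((\<lambda>y. (truncated_mass \<rho> y - truncated_mass \<rho> l) / (y - l) - ?\<mu> l) \<longlongrightarrow> 0) (at l)"
    by (rule Lim_null_comparison[OF _ lim0])
  then have "((\<lambda>y. (truncated_mass \<rho> y - truncated_mass \<rho> l) / (y - l)) \<longlongrightarrow> ?\<mu> l) (at l)"
    by (simp add: LIM_zero_iff)
  then show ?thesis
    by (simp add: has_field_derivative_iff)
qed

lemma truncated_mass_inverse_ex1:
  assumes s: "0 < s" "s < 1"
  shows "\<exists>!l. 0 < l \<and> truncated_mass \<rho> l = s"
proof -
  have "continuous_on {0..\<rho> 0} (truncated_mass \<rho>)"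
    by (rule continuous_on_subset[OF continuous_on_truncated_mass]) auto
  then obtain l where l: "0 \<le> l" "truncated_mass \<rho> l = s"
    using IVT'[of "truncated_mass \<rho>" 0 s "\<rho> 0"] truncated_mass_0 truncated_mass_eq_1[of "\<rho> 0"]
      s density_nonneg[of 0] by auto
  with s truncated_mass_0 have "0 < l"
    by (cases "l = 0") auto
  moreover have "l' = l" if "0 < l'" "truncated_mass \<rho> l' = s" for l'
    using truncated_mass_strict_mono[of l' l] truncated_mass_strict_mono[of l l'] that l s
    by (cases l' l rule: linorder_cases) auto
  ultimately show ?thesis
    using l by blast
qed

lemma height_pos: "0 < s \<Longrightarrow> s < 1 \<Longrightarrow> 0 < height \<rho> s"
  and truncated_mass_height: "0 < s \<Longrightarrow> s < 1 \<Longrightarrow> truncated_mass \<rho> (height \<rho> s) = s"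
  using theI'[OF truncated_mass_inverse_ex1] unfolding height_eq_inverse_truncated_mass by auto

lemma height_eqI:
  assumes "0 < l" "truncated_mass \<rho> l < 1"
  shows "height \<rho> (truncated_mass \<rho> l) = l"
  unfolding height_eq_inverse_truncated_mass
  using assms truncated_mass_pos[OF assms(1)]
  by (intro the1_equality truncated_mass_inverse_ex1) auto

lemma superlevel_measure_height_pos: "0 < s \<Longrightarrow> s < 1 \<Longrightarrow> 0 < superlevel_measure \<rho> (height \<rho> s)"
  using truncated_mass_less_1_iff[of "height \<rho> s"] height_pos truncated_mass_height by force

lemma height_strict_mono: "0 < s \<Longrightarrow> s < s' \<Longrightarrow> s' < 1 \<Longrightarrow> height \<rho> s < height \<rho> s'"
  using truncated_mass_mono[of "height \<rho> s'" "height \<rho> s"] height_pos[of s']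
    truncated_mass_height[of s] truncated_mass_height[of s'] by force

lemma height_mono: "0 < s \<Longrightarrow> s \<le> s' \<Longrightarrow> s' < 1 \<Longrightarrow> height \<rho> s \<le> height \<rho> s'"
  using height_strict_mono[of s s'] by (cases "s = s'") auto

lemma height_less_origin: "0 < s \<Longrightarrow> s < 1 \<Longrightarrow> height \<rho> s < \<rho> 0"
  using truncated_mass_eq_1[of "height \<rho> s"] truncated_mass_height[of s] by force

lemma height_exceeds:
  assumes v: "0 \<le> v" "truncated_mass \<rho> v < 1"
  obtains s where "0 < s" "s < 1" "v < height \<rho> s"
proof -
  define s where "s = (truncated_mass \<rho> v + 1) / 2"
  have s: "0 < s" "s < 1" "truncated_mass \<rho> v < s"
    using v truncated_mass_mono[of 0 v] truncated_mass_0 by (auto simp: s_def)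
  have "v < height \<rho> s"
  proof (rule ccontr)
    assume "\<not> v < height \<rho> s"
    then have "truncated_mass \<rho> (height \<rho> s) \<le> truncated_mass \<rho> v"
      using height_pos[OF s(1,2)] by (intro truncated_mass_mono) auto
    with s truncated_mass_height[OF s(1,2)] show False
      by simp
  qed
  with s that show ?thesis
    by blast
qed

lemma isCont_height:
  assumes s: "0 < s" "s < 1"
  shows "isCont (height \<rho>) s"
proof -
  define l where "l = height \<rho> s"
  define l' where "l' = height \<rho> ((1 + s) / 2)"
  have l: "0 < l" "l < l'" "truncated_mass \<rho> l' < 1"
    using s height_pos[of s] height_strict_mono[of s "(1 + s) / 2"]
      truncated_mass_height[of "(1 + s) / 2"] by (auto simp: l_def l'_def)
  define d where "d = min (l / 2) (l' - l)"
  have near: "0 < z \<and> truncated_mass \<rho> z < 1" if "\<bar>z - l\<bar> \<le> d" for z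
  proof -
    have "l - z \<le> d" "z - l \<le> d"
      using abs_le_D1[OF that] abs_le_D2[OF that] by auto
    then have "0 < z" "z \<le> l'"
      using l unfolding d_def by auto
    then show ?thesis
      using truncated_mass_mono[of z l'] l by auto
  qed
  have "isCont (height \<rho>) (truncated_mass \<rho> l)"
  proof (rule isCont_inverse_function[where f="truncated_mass \<rho>"])
    show "0 < d"
      using l by (simp add: d_def)
    show "height \<rho> (truncated_mass \<rho> z) = z" if "\<bar>z - l\<bar> \<le> d" for z
      using near[OF that] by (intro height_eqI) auto
    show "isCont (truncated_mass \<rho>) z" if "\<bar>z - l\<bar> \<le> d" for z
      using near[OF that] continuous_on_interior[OF continuous_on_truncated_mass, of z] by simp
  qed
  then show ?thesis
    using truncated_mass_height[OF s] by (simp add: l_def)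
qed

lemma height_tendsto_0: "filterlim (height \<rho>) (at_right 0) (at_right 0)"
  unfolding filterlim_at
proof
  have ev: "\<forall>\<^sub>F s in at_right 0. 0 < s \<and> s < (1::real)"
    unfolding eventually_at_right_field by (intro exI[of _ 1]) auto
  then show "\<forall>\<^sub>F s in at_right 0. height \<rho> s \<in> {0<..} \<and> height \<rho> s \<noteq> 0"
    by eventually_elim (auto dest: height_pos)
  show "(height \<rho> \<longlongrightarrow> 0) (at_right 0)"
  proof (rule order_tendstoI)
    fix a :: real
    assume "a < 0"
    from ev show "\<forall>\<^sub>F s in at_right 0. a < height \<rho> s"
      by eventually_elim (use \<open>a < 0\<close> in \<open>auto dest: height_pos\<close>)
  next
    fix a :: real
    assume a: "0 < a"
    show "\<forall>\<^sub>F s in at_right 0. height \<rho> s < a"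
      unfolding eventually_at_right_field
    proof (intro exI[of _ "min (truncated_mass \<rho> a) 1"] conjI allI impI)
      show "0 < min (truncated_mass \<rho> a) 1"
        using truncated_mass_pos[OF a] by simp
      fix s :: real
      assume s: "0 < s" "s < min (truncated_mass \<rho> a) 1"
      then show "height \<rho> s < a"
        using truncated_mass_mono[of a "height \<rho> s"] truncated_mass_height[of s] a by force
    qed
  qed
qed

definition value_distribution :: "real measure" where
  "value_distribution = distr (restrict_space lborel (cball (0::'a) R)) borel \<rho>"

lemma finite_borel_measure_value_distribution: "finite_borel_measure value_distribution"
proof -
  have "emeasure value_distribution (space value_distribution) = emeasure lborel (cball (0::'a) R)"
    unfolding value_distribution_def
    by (subst emeasure_distr) (auto intro!: measurable_restrict_space1 simp: emeasure_restrict_space)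
  also have "\<dots> < \<infinity>"
    using fmeasurable_compact[of "cball (0::'a) R"] by (simp add: fmeasurable_def)
  finally have "finite_measure value_distribution"
    by (intro finite_measureI) simp
  then show ?thesis
    unfolding finite_borel_measure_def finite_borel_measure_axioms_def value_distribution_def by simp
qed

lemma measure_value_distribution:
  "A \<in> sets borel \<Longrightarrow> measure value_distribution A = measure lborel {x \<in> cball 0 R. \<rho> x \<in> A}"
proof -
  assume A: "A \<in> sets borel"
  have "measure value_distribution A = measure (restrict_space lborel (cball (0::'a) R)) (\<rho> -` A \<inter> cball 0 R)"
    unfolding value_distribution_def using A
    by (subst measure_distr) (auto intro!: measurable_restrict_space1)
  also have "\<dots> = measure lborel (\<rho> -` A \<inter> cball 0 R)"
    by (subst measure_restrict_space) auto
  also have "\<rho> -` A \<inter> cball 0 R = {x \<in> cball 0 R. \<rho> x \<in> A}"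
    by auto
  finally show ?thesis .
qed

lemma superlevel_measure_eq_cdf:
  assumes l: "0 \<le> l"
  shows "superlevel_measure \<rho> l = measure lborel (cball (0::'a) R) - cdf value_distribution l"
proof -
  have "{x. l < \<rho> x} = cball 0 R - {x \<in> cball 0 R. \<rho> x \<in> {..l}}"
    using superlevel_subset_cball[OF l] by auto
  moreover have "measure lborel (cball 0 R - {x \<in> cball 0 R. \<rho> x \<in> {..l}}) =
      measure lborel (cball (0::'a) R) - measure lborel {x \<in> cball 0 R. \<rho> x \<in> {..l}}"
    using fmeasurable_compact[of "cball (0::'a) R"] by (intro measure_Diff) (auto simp: fmeasurable_def)
  ultimately show ?thesis
    unfolding superlevel_measure_def cdf_def by (simp add: measure_value_distribution)
qed

lemma superlevel_measure_right_continuous: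
  assumes l: "0 \<le> l"
  shows "(superlevel_measure \<rho> \<longlongrightarrow> superlevel_measure \<rho> l) (at_right l)"
proof -
  interpret finite_borel_measure value_distribution
    by (rule finite_borel_measure_value_distribution)
  have "((\<lambda>z. measure lborel (cball (0::'a) R) - cdf value_distribution z)
      \<longlongrightarrow> superlevel_measure \<rho> l) (at_right l)"
    using cdf_is_right_cont[of l] superlevel_measure_eq_cdf[OF l]
    unfolding continuous_within by (auto intro!: tendsto_eq_intros)
  moreover have "\<forall>\<^sub>F z in at_right l.
      measure lborel (cball (0::'a) R) - cdf value_distribution z = superlevel_measure \<rho> z"
    unfolding eventually_at_right_field
    using l by (intro exI[of _ "l + 1"]) (auto simp: superlevel_measure_eq_cdf)
  ultimately show ?thesis
    by (rule Lim_transform_eventually)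
qed

lemma isCont_superlevel_measure_iff:
  assumes l: "0 < l"
  shows "isCont (superlevel_measure \<rho>) l \<longleftrightarrow> measure lborel {x. \<rho> x = l} = 0"
proof -
  interpret finite_borel_measure value_distribution
    by (rule finite_borel_measure_value_distribution)
  have "\<forall>\<^sub>F z in nhds l. superlevel_measure \<rho> z = measure lborel (cball (0::'a) R) - cdf value_distribution z"
    using l by (intro eventually_nhds_in_open[of "{0<..}", THEN eventually_mono])
      (auto simp: superlevel_measure_eq_cdf)
  then have "isCont (superlevel_measure \<rho>) l \<longleftrightarrow>
      isCont (\<lambda>z. measure lborel (cball (0::'a) R) - cdf value_distribution z) l"
    by (rule isCont_cong)
  also have "\<dots> \<longleftrightarrow> isCont (cdf value_distribution) l"
    using continuous_diff[OF continuous_const, of "at l" "\<lambda>z. measure lborel (cball (0::'a) R) - cdf value_distribution z"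
        "measure lborel (cball (0::'a) R)"]
    by (auto intro: continuous_intros)
  also have "\<dots> \<longleftrightarrow> measure value_distribution {l} = 0"
    by (rule isCont_cdf)
  also have "measure value_distribution {l} = measure lborel {x \<in> cball 0 R. \<rho> x \<in> {l}}"
    by (simp add: measure_value_distribution)
  also have "{x \<in> cball 0 R. \<rho> x \<in> {l}} = {x. \<rho> x = l}"
    using superlevel_subset_cball[of "l / 2"] l by force
  finally show ?thesis .
qed

lemma height_has_derivative:
  assumes s: "0 < s" "s < 1" and cont: "isCont (superlevel_measure \<rho>) (height \<rho> s)"
  shows "(height \<rho> has_field_derivative height_slope \<rho> s) (at s)"
  unfolding height_slope_def inverse_eq_divide[symmetric]
proof (rule DERIV_inverse_function[where f="truncated_mass \<rho>" and a=0 and b=1])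
  show "(truncated_mass \<rho> has_field_derivative superlevel_measure \<rho> (height \<rho> s)) (at (height \<rho> s))"
    using truncated_mass_has_derivative[OF height_pos[OF s] cont] .
qed (use s superlevel_measure_height_pos[OF s] truncated_mass_height isCont_height[OF s] in auto)

lemma countable_height_jumps:
  "countable {s \<in> {0<..<1}. \<not> isCont (superlevel_measure \<rho>) (height \<rho> s)}"
    (is "countable ?E")
proof (rule countable_image_inj_on)
  have "mono_on {0<..} (\<lambda>l. - superlevel_measure \<rho> l)"
    by (rule mono_onI) (use superlevel_measure_antimono in auto)
  then have "countable {l \<in> {0<..}. \<not> isCont (\<lambda>l. - superlevel_measure \<rho> l) l}"
    by (rule mono_on_ctble_discont_open[rotated]) simp
  moreover have "height \<rho> ` ?E \<subseteq> {l \<in> {0<..}. \<not> isCont (\<lambda>l. - superlevel_measure \<rho> l) l}"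
    using height_pos continuous_minus[of "at _" "\<lambda>l. - superlevel_measure \<rho> l"] by auto
  ultimately show "countable (height \<rho> ` ?E)"
    by (rule countable_subset[rotated])
  show "inj_on (height \<rho>) ?E"
    by (intro inj_onI) (metis (no_types, lifting) greaterThanLessThan_iff height_strict_mono
        linorder_cases mem_Collect_eq less_irrefl)
qed

lemma height_slope_pos: "0 < s \<Longrightarrow> s < 1 \<Longrightarrow> 0 < height_slope \<rho> s"
  using superlevel_measure_height_pos by (simp add: height_slope_def)

lemma height_slope_mono: "mono_on {0<..<1} (height_slope \<rho>)"
proof (rule mono_onI)
  fix s s' :: real
  assume s: "s \<in> {0<..<1}" "s' \<in> {0<..<1}" "s \<le> s'"
  then have "superlevel_measure \<rho> (height \<rho> s') \<le> superlevel_measure \<rho> (height \<rho> s)"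
    using height_mono[of s s'] height_pos[of s] by (intro superlevel_measure_antimono) auto
  then show "height_slope \<rho> s \<le> height_slope \<rho> s'"
    unfolding height_slope_def using s superlevel_measure_height_pos[of s']
    by (intro divide_left_mono) auto
qed

lemma height_slope_tendsto_0: "(height_slope \<rho> \<longlongrightarrow> 1 / measure lborel (ball (0::'a) R)) (at_right 0)"
proof -
  have "((\<lambda>s. superlevel_measure \<rho> (height \<rho> s)) \<longlongrightarrow> superlevel_measure \<rho> 0) (at_right 0)"
    using filterlim_compose[OF superlevel_measure_right_continuous height_tendsto_0] by simp
  moreover have "0 < measure lborel (ball (0::'a) R)"
    using radius_pos by (simp add: content_ball)
  ultimately show ?thesis
    unfolding height_slope_def superlevel_measure_0 by (intro tendsto_intros) auto
qed

lemma height_slope_le_increment: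
  assumes "0 < s" "s \<le> s'" "s' < 1"
  shows "(s' - s) * height_slope \<rho> s \<le> height \<rho> s' - height \<rho> s"
proof -
  have "truncated_mass \<rho> (height \<rho> s') - truncated_mass \<rho> (height \<rho> s)
      \<le> (height \<rho> s' - height \<rho> s) * superlevel_measure \<rho> (height \<rho> s)"
    using assms height_pos[of s] height_mono[of s s'] by (intro truncated_mass_increment_le) auto
  then show ?thesis
    using assms truncated_mass_height[of s] truncated_mass_height[of s'] superlevel_measure_height_pos[of s]
    by (simp add: height_slope_def pos_divide_le_eq)
qed

lemma integral_height_slope_le:
  assumes "0 < c" "c < d" "d < 1"
  shows "height_slope \<rho> integrable_on {c..d} \<and> integral {c..d} (height_slope \<rho>) \<le> \<rho> 0"
proof
  define \<delta> where "\<delta> = min (d - c) ((1 - d) / 2)"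
  have \<delta>_bounds: "\<delta> \<le> d - c" "\<delta> \<le> (1 - d) / 2"
    unfolding \<delta>_def by (rule min.cobounded1, rule min.cobounded2)
  have \<delta>: "0 < \<delta>" "c + \<delta> \<le> d" "d + \<delta> < 1"
    using assms \<delta>_bounds by (auto simp: \<delta>_def)
  show int: "height_slope \<rho> integrable_on {c..d}"
    using assms by (intro integrable_on_mono_on mono_on_subset[OF height_slope_mono]) auto
  have "integral {c..d} (height_slope \<rho>) \<le> height \<rho> (d + \<delta>) - height \<rho> c"
  proof (rule integral_le_of_forward_difference[OF \<delta>(2,1) int])
    show "continuous_on {c..d + \<delta>} (height \<rho>)"
      using assms \<delta> by (intro continuous_at_imp_continuous_on ballI isCont_height) auto
    show "mono_on {c..d + \<delta>} (height \<rho>)"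
      using assms \<delta> by (intro mono_onI height_mono) auto
    show "\<delta> * height_slope \<rho> s \<le> height \<rho> (s + \<delta>) - height \<rho> s" if "s \<in> {c..d}" for s
      using height_slope_le_increment[of s "s + \<delta>"] that assms \<delta> by auto
  qed
  also have "\<dots> \<le> \<rho> 0"
    using height_less_origin[of "d + \<delta>"] height_pos[of c] assms \<delta> by simp
  finally show "integral {c..d} (height_slope \<rho>) \<le> \<rho> 0" .
qed

lemma set_integrable_height_slope: "set_integrable lborel {0<..<1} (height_slope \<rho>)"
proof -
  have einterval: "einterval 0 1 = {0<..<1::real}"
    by (simp add: zero_ereal_def one_ereal_def)
  have "height_slope \<rho> \<in> borel_measurable (restrict_space borel {0<..<1})"
    by (rule borel_measurable_mono_on_fnc[OF height_slope_mono])
  also have "borel_measurable (restrict_space borel {0<..<1::real}) =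
      borel_measurable (restrict_space lborel {0<..<1})"
    by (intro measurable_cong_sets sets_restrict_space_cong) auto
  finally have "set_borel_measurable lborel (einterval 0 1) (height_slope \<rho>)"
    unfolding einterval set_borel_measurable_def by (subst (asm) borel_measurable_restrict_space_iff) auto
  then have "set_integrable lborel (einterval 0 1) (height_slope \<rho>)"
    using integral_height_slope_le height_slope_pos
    by (intro set_integrable_einterval_of_bounded_integrals[where C="\<rho> 0"])
      (auto simp: einterval zero_ereal_def one_ereal_def less_imp_le)
  then show ?thesis
    unfolding einterval .
qed

lemma level_set_null:
  assumes strict: "strictly_radially_decreasing_on_supp \<rho>" and l: "0 < l"
  shows "measure lborel {x. \<rho> x = l} = 0"
proof (cases "{x. \<rho> x = l} = {}")
  case False
  then obtain x0 where x0: "\<rho> x0 = l"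
    by auto
  have in_supp: "x \<in> supp \<rho>" if "\<rho> x = l" for x
    unfolding supp_def using that l by (intro subsetD[OF closure_subset]) simp
  have less: "\<rho> y < \<rho> x" if "norm x < norm y" "\<rho> y = l" for x y
    using strict in_supp[OF that(2)] that(1) unfolding strictly_radially_decreasing_on_supp_def by blast
  have "norm y = norm x0" if "\<rho> y = l" for y
    using less[of y x0] less[of x0 y] that x0 by (cases "norm y" "norm x0" rule: linorder_cases) auto
  then have sub: "{x. \<rho> x = l} \<subseteq> sphere 0 (norm x0)"
    by auto
  have "sphere (0::'a) (norm x0) \<in> null_sets lborel"
    using negligible_sphere[of "0::'a" "norm x0"]
    by (auto simp: null_sets_completion_iff negligible_iff_null_sets negligible_convex_frontier)
  then have "{x. \<rho> x = l} \<in> null_sets lborel"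
    by (rule null_sets_subset[OF _ _ sub]) simp
  then show ?thesis
    by (rule measure_eq_0_null_sets)
qed simp

lemma isCont_height_slope:
  assumes strict: "strictly_radially_decreasing_on_supp \<rho>" and s: "0 < s" "s < 1"
  shows "isCont (height_slope \<rho>) s"
proof -
  have "isCont (superlevel_measure \<rho>) (height \<rho> s)"
    using isCont_superlevel_measure_iff[OF height_pos[OF s]] level_set_null[OF strict height_pos[OF s]]
    by simp
  then have "isCont (\<lambda>s. superlevel_measure \<rho> (height \<rho> s)) s"
    by (rule isCont_o2[OF isCont_height[OF s]])
  then show ?thesis
    unfolding height_slope_def using superlevel_measure_height_pos[OF s] by (intro continuous_intros) auto
qed

lemma superlevel_measure_height_le_ball:
  assumes strict: "strictly_radially_decreasing_on_supp \<rho>" and \<epsilon>: "0 < \<epsilon>" "\<epsilon> < R"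
  obtains s where "0 < s" "s < 1" "superlevel_measure \<rho> (height \<rho> s) \<le> measure lborel (ball (0::'a) \<epsilon>)"
proof -
  obtain w :: 'a where w: "norm w = \<epsilon>"
    using vector_choose_size[of \<epsilon>] \<epsilon> by auto
  then have "w \<in> supp \<rho>"
    using \<epsilon> supp_eq by simp
  then have "ball 0 \<epsilon> \<subseteq> {x. \<rho> w < \<rho> x}"
    using strict w unfolding strictly_radially_decreasing_on_supp_def by auto
  then have "measure lborel (ball (0::'a) \<epsilon>) \<le> superlevel_measure \<rho> (\<rho> w)"
    unfolding superlevel_measure_def using density_nonneg[of w]
    by (intro measure_mono_fmeasurable superlevel_fmeasurable) auto
  moreover have "0 < measure lborel (ball (0::'a) \<epsilon>)"
    using \<epsilon> by (simp add: content_ball)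
  ultimately have "truncated_mass \<rho> (\<rho> w) < 1"
    using truncated_mass_less_1_iff[OF density_nonneg[of w]] by linarith
  then obtain s where s: "0 < s" "s < 1" "\<rho> w < height \<rho> s"
    using height_exceeds density_nonneg by blast
  have "ball (0::'a) \<epsilon> \<in> fmeasurable lborel"
    by (rule fmeasurableI2[OF fmeasurable_compact[of "cball 0 \<epsilon>"]]) auto
  then have "superlevel_measure \<rho> (height \<rho> s) \<le> measure lborel (ball (0::'a) \<epsilon>)"
    unfolding superlevel_measure_def using superlevel_subset_ball[OF s(3)] w
    by (intro measure_mono_fmeasurable) auto
  with s that show ?thesis
    by blast
qed

lemma height_slope_unbounded:
  assumes strict: "strictly_radially_decreasing_on_supp \<rho>"
  shows "\<not> bdd_above (height_slope \<rho> ` {0<..<1})"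
proof
  assume "bdd_above (height_slope \<rho> ` {0<..<1})"
  then obtain K0 where "\<forall>s\<in>{0<..<1}. height_slope \<rho> s \<le> K0"
    by (auto simp: bdd_above_def)
  define K where "K = max K0 1"
  with \<open>\<forall>s\<in>{0<..<1}. height_slope \<rho> s \<le> K0\<close>
  have K: "0 < K" "\<And>s. 0 < s \<Longrightarrow> s < 1 \<Longrightarrow> height_slope \<rho> s \<le> K"
    by (auto simp: le_max_iff_disj)
  have "\<forall>\<^sub>F \<epsilon> in at_right 0. measure lborel (ball (0::'a) \<epsilon>) < 1 / K"
    using K(1) by (intro order_tendstoD(2)[OF measure_ball_tendsto_0]) auto
  moreover have "\<forall>\<^sub>F \<epsilon> in at_right 0. \<epsilon> < R"
    using radius_pos by (intro order_tendstoD(2)[OF tendsto_ident_at])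
  ultimately have "\<forall>\<^sub>F \<epsilon> in at_right 0. 0 < \<epsilon> \<and> \<epsilon> < R \<and> measure lborel (ball (0::'a) \<epsilon>) < 1 / K"
    by (intro eventually_conj eventually_at_right_less)
  then obtain \<epsilon> where \<epsilon>: "0 < \<epsilon>" "\<epsilon> < R" "measure lborel (ball (0::'a) \<epsilon>) < 1 / K"
    using eventually_happens'[OF trivial_limit_at_right_real] by blast
  obtain s where s: "0 < s" "s < 1" "superlevel_measure \<rho> (height \<rho> s) \<le> measure lborel (ball (0::'a) \<epsilon>)"
    by (rule superlevel_measure_height_le_ball[OF strict \<epsilon>(1,2)])
  then have "superlevel_measure \<rho> (height \<rho> s) < 1 / K"
    using \<epsilon>(3) by linarith
  then have "K < height_slope \<rho> s"
    using superlevel_measure_height_pos[OF s(1,2)] K(1) by (simp add: height_slope_def field_simps)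
  with K(2)[OF s(1,2)] show False
    by simp
qed

lemma superlevel_measure_strict_antimono:
  assumes cont: "continuous_on UNIV \<rho>" and l: "0 < l1" "l1 < l2" "l2 < \<rho> 0"
  shows "superlevel_measure \<rho> l2 < superlevel_measure \<rho> l1"
proof -
  define U where "U = {x. l1 < \<rho> x \<and> \<rho> x < l2}"
  \<comment> \<open>\<open>U\<close> is open, and nonempty by the intermediate value theorem along a ray.\<close>
  obtain w :: 'a where w: "norm w = 1"
    using vector_choose_size[of 1] by auto
  have "continuous_on {0..R + 1} (\<lambda>u. \<rho> (u *\<^sub>R w))"
    by (rule continuous_on_compose2[OF cont]) (auto intro!: continuous_intros)
  moreover have "\<rho> ((R + 1) *\<^sub>R w) = 0"
    using w radius_pos by (intro density_eq_0_outside) simp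
  ultimately obtain u where "\<rho> (u *\<^sub>R w) = (l1 + l2) / 2"
    using IVT2'[of "\<lambda>u. \<rho> (u *\<^sub>R w)" "R + 1" "(l1 + l2) / 2" 0] radius_pos l by auto
  then have "u *\<^sub>R w \<in> U"
    using l by (simp add: U_def)
  moreover have "open U"
    unfolding U_def by (intro open_Collect_conj open_Collect_less cont continuous_on_const)
  ultimately obtain r where r: "0 < r" "ball (u *\<^sub>R w) r \<subseteq> U"
    using open_contains_ball by blast
  have diff: "{x. l1 < \<rho> x} - {x. l2 < \<rho> x} \<in> fmeasurable lborel"
    using l by (intro fmeasurableI2[OF superlevel_fmeasurable[of l1]]) auto
  have "ball (u *\<^sub>R w) r \<subseteq> {x. l1 < \<rho> x} - {x. l2 < \<rho> x}"
    using r by (auto simp: U_def)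
  then have "measure lborel (ball (u *\<^sub>R w) r) \<le> measure lborel ({x. l1 < \<rho> x} - {x. l2 < \<rho> x})"
    by (rule measure_mono_fmeasurable[OF _ _ diff]) simp
  moreover have "0 < measure lborel (ball (u *\<^sub>R w) r)"
    using r by (simp add: content_ball)
  ultimately have "0 < measure lborel ({x. l1 < \<rho> x} - {x. l2 < \<rho> x})"
    by linarith
  also have "\<dots> = superlevel_measure \<rho> l1 - superlevel_measure \<rho> l2"
    unfolding superlevel_measure_def using superlevel_fmeasurable[of l1] l
    by (subst measure_Diff) (auto simp: fmeasurable_def)
  finally show ?thesis
    by simp
qed

lemma height_slope_strict_mono:
  assumes cont: "continuous_on UNIV \<rho>"
  shows "strict_mono_on {0<..<1} (height_slope \<rho>)"
proof (rule strict_mono_onI)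
  fix s s' :: real
  assume s: "s \<in> {0<..<1}" "s' \<in> {0<..<1}" "s < s'"
  then have "superlevel_measure \<rho> (height \<rho> s') < superlevel_measure \<rho> (height \<rho> s)"
    using height_pos[of s] height_strict_mono[of s s'] height_less_origin[of s']
    by (intro superlevel_measure_strict_antimono[OF cont]) auto
  then show "height_slope \<rho> s < height_slope \<rho> s'"
    unfolding height_slope_def using superlevel_measure_height_pos[of s'] s
    by (intro divide_strict_left_mono) auto
qed

end

section \<open>Superpositions of centred balls\<close>

(* With c = c_n, e = -1/n and g = h_t' this is the formula defining interp_curve. *)
definition ball_superposition :: "real \<Rightarrow> real \<Rightarrow> (real \<Rightarrow> real) \<Rightarrow> 'a::euclidean_space \<Rightarrow> real" where
  "ball_superposition c e g x = (LINT s:{0<..<1}|lborel. indicator (ball 0 ((c * g s) powr e)) x * g s)"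

locale superposition_weight =
  fixes g :: "real \<Rightarrow> real" and g0 c e :: real
  assumes weight_mono: "mono_on {0<..<1} g"
    and weight_tendsto: "(g \<longlongrightarrow> g0) (at_right 0)"
    and weight_limit_pos: "0 < g0"
    and weight_integrable: "set_integrable lborel {0<..<1} g"
    and scale_pos: "0 < c"
    and exponent_neg: "e < 0"
begin

abbreviation radius :: "real \<Rightarrow> real" where
  "radius s \<equiv> (c * g s) powr e"

lemma weight_ge: "0 < s \<Longrightarrow> s < 1 \<Longrightarrow> g0 \<le> g s"
proof (rule tendsto_upperbound[OF weight_tendsto])
  assume s: "0 < s" "s < 1"
  show "\<forall>\<^sub>F s' in at_right 0. g s' \<le> g s"
    unfolding eventually_at_right_field using s
    by (intro exI[of _ s]) (auto intro: mono_onD[OF weight_mono])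
qed simp

lemma weight_pos: "0 < s \<Longrightarrow> s < 1 \<Longrightarrow> 0 < g s"
  using weight_ge weight_limit_pos by fastforce

lemma radius_le: "0 < s \<Longrightarrow> s < 1 \<Longrightarrow> radius s \<le> (c * g0) powr e"
  using weight_ge weight_limit_pos scale_pos exponent_neg by (intro powr_mono2') auto

lemma radius_antimono: "0 < s \<Longrightarrow> s \<le> s' \<Longrightarrow> s' < 1 \<Longrightarrow> radius s' \<le> radius s"
  using mono_onD[OF weight_mono, of s s'] weight_pos[of s] scale_pos exponent_neg
  by (intro powr_mono2') auto

lemma radius_tendsto: "(radius \<longlongrightarrow> (c * g0) powr e) (at_right 0)"
  using scale_pos weight_limit_pos by (intro tendsto_intros weight_tendsto) auto

lemma isCont_radius: "isCont g s \<Longrightarrow> 0 < s \<Longrightarrow> s < 1 \<Longrightarrow> isCont radius s"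
  using weight_pos[of s] scale_pos by (intro continuous_intros) auto

lemma borel_measurable_weight[measurable]:
  "(\<lambda>s. indicator {0<..<1::real} s * g s) \<in> borel_measurable lborel"
  using weight_integrable unfolding set_integrable_def by (simp add: borel_measurable_integrable)

(* The restricted integrand in a form that the measurable method can handle. *)
lemma restricted_shell_eq:
  "indicator {0<..<1::real} s * (if v < radius s then g s else 0)
    = (if v < (c * (indicator {0<..<1::real} s * g s)) powr e then indicator {0<..<1::real} s * g s else 0)"
  by (auto simp: indicator_def)

lemma set_integrable_shell:
  "set_integrable lborel {0<..<1} (\<lambda>s. if v < radius s then g s else 0)"
  unfolding set_integrable_def
proof (rule Bochner_Integration.integrable_bound)
  show "integrable lborel (\<lambda>s. indicator {0<..<1::real} s *\<^sub>R g s)"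
    using weight_integrable unfolding set_integrable_def .
  show "(\<lambda>s. indicator {0<..<1::real} s *\<^sub>R (if v < radius s then g s else 0)) \<in> borel_measurable lborel"
    unfolding real_scaleR_def restricted_shell_eq by measurable
  show "AE s in lborel. norm (indicator {0<..<1::real} s *\<^sub>R (if v < radius s then g s else 0))
      \<le> norm (indicator {0<..<1::real} s *\<^sub>R g s)"
    by (rule AE_I2) (auto simp: indicator_def)
qed

lemma ball_superposition_eq_radial:
  "ball_superposition c e g x = (LINT s:{0<..<1}|lborel. if norm x < radius s then g s else 0)"
proof -
  have "indicator (ball 0 r) x * w = (if norm x < r then w else 0)" for r w :: real
    by (simp add: indicator_def of_bool_def)
  then show ?thesis
    unfolding ball_superposition_def by (simp only:)
qed

lemma ball_superposition_eq_0:
  assumes "(c * g0) powr e \<le> norm (x::'a::euclidean_space)"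
  shows "ball_superposition c e g x = 0"
proof -
  have "(\<lambda>s. indicator {0<..<1::real} s *\<^sub>R (if norm x < radius s then g s else 0)) = (\<lambda>_. 0)"
    using radius_le assms by (force simp: indicator_def)
  then show ?thesis
    unfolding ball_superposition_eq_radial set_lebesgue_integral_def by simp
qed

lemma ball_superposition_pos:
  assumes x: "norm (x::'a::euclidean_space) < (c * g0) powr e"
  shows "0 < ball_superposition c e g x"
proof -
  obtain b0 where b0: "0 < b0" "\<And>s. 0 < s \<Longrightarrow> s < b0 \<Longrightarrow> norm x < radius s"
    using order_tendstoD(1)[OF radius_tendsto x] unfolding eventually_at_right_field by blast
  define b where "b = min b0 1"
  have b: "0 < b" "b \<le> 1" "\<And>s. 0 < s \<Longrightarrow> s < b \<Longrightarrow> norm x < radius s"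
    using b0 by (auto simp: b_def)
  have "0 < b * g0"
    using b weight_limit_pos by simp
  also have "\<dots> = (LINT s|lborel. indicator {0<..<b} s * g0)"
    using b by simp
  also have "\<dots> \<le> (LINT s|lborel. indicator {0<..<1::real} s *\<^sub>R (if norm x < radius s then g s else 0))"
  proof (rule integral_mono)
    show "integrable lborel (\<lambda>s. indicator {0<..<b} s * g0)"
      using b(1) by (intro integrable_mult_left) (simp add: integrable_indicator_iff emeasure_lborel_Ioo)
    show "integrable lborel (\<lambda>s. indicator {0<..<1::real} s *\<^sub>R (if norm x < radius s then g s else 0))"
      using set_integrable_shell unfolding set_integrable_def .
    show "indicator {0<..<b} s * g0 \<le> indicator {0<..<1::real} s *\<^sub>R (if norm x < radius s then g s else 0)" for s
      using b(2) b(3)[of s] weight_ge[of s] weight_pos[of s] weight_limit_pos by (auto simp: indicator_def)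
  qed
  also have "\<dots> = ball_superposition c e g x"
    unfolding ball_superposition_eq_radial set_lebesgue_integral_def ..
  finally show ?thesis .
qed

lemma supp_ball_superposition: "supp (ball_superposition c e g :: 'a::euclidean_space \<Rightarrow> real) = cball 0 ((c * g0) powr e)"
proof -
  have "{x::'a. ball_superposition c e g x \<noteq> 0} = ball 0 ((c * g0) powr e)"
    using ball_superposition_eq_0 ball_superposition_pos by (force simp: not_le[symmetric])
  moreover have "0 < (c * g0) powr e"
    using scale_pos weight_limit_pos by simp
  ultimately show ?thesis
    unfolding supp_def by simp
qed

lemma radius_attains:
  assumes cont: "\<And>s. 0 < s \<Longrightarrow> s < 1 \<Longrightarrow> isCont g s"
    and unbounded: "\<not> bdd_above (g ` {0<..<1})"
    and m: "0 < m" "m < (c * g0) powr e"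
  obtains s where "0 < s" "s < 1" "radius s = m"
proof -
  have "\<forall>\<^sub>F s in at_right 0. m < radius s"
    using order_tendstoD(1)[OF radius_tendsto m(2)] .
  moreover have "\<forall>\<^sub>F s in at_right (0::real). 0 < s \<and> s < 1"
    unfolding eventually_at_right_field by (intro exI[of _ 1]) auto
  ultimately have "\<forall>\<^sub>F s in at_right (0::real). 0 < s \<and> s < 1 \<and> m < radius s"
    by eventually_elim auto
  then obtain sa where sa: "0 < sa" "sa < 1" "m < radius sa"
    using eventually_happens'[OF trivial_limit_at_right_real] by blast
  have "\<exists>s\<in>{0<..<1}. m powr (1 / e) / c < g s"
    using unbounded unfolding bdd_above_def by (auto simp: not_le)
  then obtain sb where sb: "0 < sb" "sb < 1" "m powr (1 / e) / c < g sb"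
    by auto
  then have "m powr (1 / e) < c * g sb"
    using scale_pos by (simp add: field_simps)
  then have "radius sb < (m powr (1 / e)) powr e"
    using exponent_neg m by (intro powr_less_mono2_neg) auto
  also have "(m powr (1 / e)) powr e = m"
    using exponent_neg m by (simp add: powr_powr)
  finally have sb_m: "radius sb < m" .
  have "sa < sb"
    using radius_antimono[of sb sa] sa sb sb_m by fastforce
  moreover have "continuous_on {sa..sb} radius"
    using sa sb cont by (intro continuous_at_imp_continuous_on ballI isCont_radius) auto
  ultimately obtain s where s: "sa \<le> s" "s \<le> sb" "radius s = m"
    using IVT2'[of radius sb m sa] sa sb_m by auto
  show ?thesis
    using s sa sb by (intro that[of s]) auto
qed

lemma radius_crosses:
  assumes cont: "\<And>s. 0 < s \<Longrightarrow> s < 1 \<Longrightarrow> isCont g s"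
    and unbounded: "\<not> bdd_above (g ` {0<..<1})"
    and ab: "0 \<le> a" "a < b" "b \<le> (c * g0) powr e"
  obtains u v where "0 < u" "u < v" "v < 1" "\<And>s. u < s \<Longrightarrow> s < v \<Longrightarrow> a < radius s \<and> radius s < b"
proof -
  define mid where "mid = (a + b) / 2"
  obtain st where st: "0 < st" "st < 1" "radius st = mid"
    using radius_attains[OF cont unbounded, of mid] ab by (auto simp: mid_def)
  obtain d where d: "0 < d" "\<And>s. dist s st < d \<Longrightarrow> dist (radius s) mid < (b - a) / 2"
    using isCont_radius[OF cont[OF st(1,2)] st(1,2)] ab st(3) unfolding continuous_at_eps_delta
    by (metis diff_gt_0_iff_gt divide_pos_pos zero_less_numeral)
  define m where "m = min d (min st (1 - st))"
  have m: "0 < m" "m \<le> d" "m \<le> st" "m \<le> 1 - st"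
    using d st by (auto simp: m_def)
  show ?thesis
  proof (rule that[of "st - m / 2" "st + m / 2"])
    fix s
    assume "st - m / 2 < s" "s < st + m / 2"
    then have "dist s st < d"
      using m by (auto simp: dist_real_def abs_less_iff)
    then show "a < radius s \<and> radius s < b"
      using d(2)[of s] unfolding mid_def dist_real_def by (auto simp: abs_less_iff field_simps)
  qed (use m in auto)
qed

lemma ball_superposition_strict_antimono:
  fixes x y :: "'a::euclidean_space"
  assumes cont: "\<And>s. 0 < s \<Longrightarrow> s < 1 \<Longrightarrow> isCont g s"
    and unbounded: "\<not> bdd_above (g ` {0<..<1})"
    and xy: "norm x < norm y" "norm y \<le> (c * g0) powr e"
  shows "ball_superposition c e g y < ball_superposition c e g x"
proof -
  obtain u v where uv: "0 < u" "u < v" "v < 1"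
    and between: "\<And>s. u < s \<Longrightarrow> s < v \<Longrightarrow> norm x < radius s \<and> radius s < norm y"
    using radius_crosses[OF cont unbounded, of "norm x" "norm y"] xy by auto
  define F where "F z s = indicator {0<..<1::real} s *\<^sub>R (if norm z < radius s then g s else 0)" for z :: 'a and s
  have F_int: "integrable lborel (F z)" for z
    using set_integrable_shell[of "norm z"] unfolding set_integrable_def F_def .
  have "0 < (v - u) * g0"
    using uv weight_limit_pos by simp
  also have "\<dots> = (LINT s|lborel. indicator {u<..<v} s * g0)"
    using uv by simp
  also have "\<dots> \<le> (LINT s|lborel. F x s - F y s)"
  proof (rule integral_mono[OF _ Bochner_Integration.integrable_diff[OF F_int F_int]])
    show "integrable lborel (\<lambda>s. indicator {u<..<v} s * g0)"
      using uv by (intro integrable_mult_left) (simp add: integrable_indicator_iff emeasure_lborel_Ioo)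
    show "indicator {u<..<v} s * g0 \<le> F x s - F y s" for s
    proof (cases "s \<in> {u<..<v}")
      case True
      then show ?thesis
        using between[of s] weight_ge[of s] uv unfolding F_def by (auto simp: indicator_def)
    next
      case False
      then show ?thesis
        using weight_pos[of s] xy(1) unfolding F_def by (auto simp: indicator_def)
    qed
  qed
  also have "\<dots> = (LINT s|lborel. F x s) - (LINT s|lborel. F y s)"
    by (rule Bochner_Integration.integral_diff[OF F_int F_int])
  also have "\<dots> = ball_superposition c e g x - ball_superposition c e g y"
    unfolding ball_superposition_eq_radial set_lebesgue_integral_def F_def ..
  finally show ?thesis
    by simp
qed

lemma radius_strict_antimono:
  assumes strict: "strict_mono_on {0<..<1} g" and s: "s \<in> {0<..<1}" "s' \<in> {0<..<1}" "s < s'"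
  shows "radius s' < radius s"
  using strict_mono_onD[OF strict s] weight_pos[of s] scale_pos exponent_neg s
  by (intro powr_less_mono2_neg) auto

lemma countable_radius_level:
  assumes strict: "strict_mono_on {0<..<1} g"
  shows "countable {s \<in> {0<..<1}. radius s = v}"
proof (rule countable_subset)
  show "{s \<in> {0<..<1}. radius s = v} \<subseteq> {SOME s. s \<in> {0<..<1} \<and> radius s = v}"
  proof
    fix s
    assume s: "s \<in> {s \<in> {0<..<1}. radius s = v}"
    then have "s' = s" if "s' \<in> {0<..<1}" "radius s' = v" for s'
      using radius_strict_antimono[OF strict, of s s'] radius_strict_antimono[OF strict, of s' s] that
      by (cases s s' rule: linorder_cases) auto
    then show "s \<in> {SOME s. s \<in> {0<..<1} \<and> radius s = v}"
      using s by (auto intro: someI2)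
  qed
qed simp

lemma isCont_radial_profile:
  assumes strict: "strict_mono_on {0<..<1} g"
  shows "isCont (\<lambda>v. LINT s:{0<..<1}|lborel. if v < radius s then g s else 0) v"
  unfolding continuous_at_sequentially comp_def set_lebesgue_integral_def
proof (intro allI impI)
  fix X :: "nat \<Rightarrow> real"
  assume X: "X \<longlonglongrightarrow> v"
  define F where "F w s = indicator {0<..<1::real} s *\<^sub>R (if w < radius s then g s else 0)" for w s
  have F_meas: "F w \<in> borel_measurable lborel" for w
    unfolding F_def real_scaleR_def restricted_shell_eq by measurable
  have "AE s in lborel. s \<notin> {s \<in> {0<..<1}. radius s = v}"
    by (intro AE_not_in countable_imp_null_set_lborel countable_radius_level[OF strict])
  then have lim: "AE s in lborel. (\<lambda>i. F (X i) s) \<longlonglongrightarrow> F v s"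
  proof eventually_elim
    case (elim s)
    show ?case
    proof (cases "s \<in> {0<..<1}")
      case True
      with elim consider "v < radius s" | "radius s < v"
        by (auto simp: linorder_neq_iff)
      then have "\<forall>\<^sub>F i in sequentially. F (X i) s = F v s"
      proof cases
        case 1
        from order_tendstoD(2)[OF X 1] show ?thesis
          by eventually_elim (use 1 in \<open>simp add: F_def\<close>)
      next
        case 2
        from order_tendstoD(1)[OF X 2] show ?thesis
          by eventually_elim (use 2 in \<open>auto simp: F_def\<close>)
      qed
      then show ?thesis
        by (rule tendsto_eventually)
    qed (simp add: F_def)
  qed
  have bound: "AE s in lborel. norm (F w s) \<le> indicator {0<..<1::real} s *\<^sub>R g s" for w
    by (rule AE_I2) (auto simp: F_def indicator_def dest: weight_pos)
  have "integrable lborel (\<lambda>s. indicator {0<..<1::real} s *\<^sub>R g s)"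
    using weight_integrable unfolding set_integrable_def .
  from integral_dominated_convergence[OF F_meas F_meas this lim bound]
  show "(\<lambda>i. LINT s|lborel. F (X i) s) \<longlonglongrightarrow> (LINT s|lborel. F v s)" .
qed

lemma continuous_ball_superposition:
  assumes strict: "strict_mono_on {0<..<1} g"
  shows "continuous_on UNIV (ball_superposition c e g :: 'a::euclidean_space \<Rightarrow> real)"
  unfolding ball_superposition_eq_radial
  by (intro continuous_at_imp_continuous_on ballI isCont_o2[OF _ isCont_radial_profile[OF strict]])
    (auto intro: continuous_intros)

end

section \<open>The interpolation curve\<close>

lemma powr_mean_le_max:
  fixes R0 R1 t n :: real
  assumes R: "0 < R0" "0 < R1" and t: "0 \<le> t" "t \<le> 1" and n: "0 < n"
  shows "((1 - t) * R0 powr (- n) + t * R1 powr (- n)) powr (-1 / n) \<le> max R0 R1"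
proof -
  define M where "M = max R0 R1"
  have M: "0 < M" "R0 \<le> M" "R1 \<le> M"
    using R by (auto simp: M_def)
  have "M powr (- n) = (1 - t) * M powr (- n) + t * M powr (- n)"
    by (simp add: algebra_simps)
  also have "\<dots> \<le> (1 - t) * R0 powr (- n) + t * R1 powr (- n)"
    using M R n t by (intro add_mono mult_left_mono powr_mono2') auto
  finally have "((1 - t) * R0 powr (- n) + t * R1 powr (- n)) powr (-1 / n) \<le> (M powr (- n)) powr (-1 / n)"
    using M n by (intro powr_mono2') auto
  also have "\<dots> = M"
    using n M by (simp add: powr_powr)
  finally show ?thesis
    by (simp add: M_def)
qed

lemma interpolated_support_radius:
  assumes "0 < R0" "0 < R1"
  shows "(measure lborel (ball (0::'a::euclidean_space) 1) *
      ((1 - t) / measure lborel (ball (0::'a) R0) + t / measure lborel (ball (0::'a) R1))) powr (-1 / real DIM('a))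
    = ((1 - t) * R0 powr (- real DIM('a)) + t * R1 powr (- real DIM('a))) powr (-1 / real DIM('a))"
proof -
  have inverse_power: "R powr (- real DIM('a)) = 1 / R ^ DIM('a)" if "0 < R" for R :: real
    using that by (simp add: powr_minus powr_realpow divide_inverse)
  have "0 < unit_ball_vol (real DIM('a))"
    by simp
  then have "unit_ball_vol (real DIM('a)) \<noteq> 0"
    by linarith
  then have "measure lborel (ball (0::'a) 1) *
      ((1 - t) / measure lborel (ball (0::'a) R0) + t / measure lborel (ball (0::'a) R1))
      = (1 - t) * (1 / R0 ^ DIM('a)) + t * (1 / R1 ^ DIM('a))"
    using assms by (simp add: content_ball distrib_left)
  then show ?thesis
    using assms by (simp add: inverse_power)
qed

lemma interpolated_height_deriv_ae:
  fixes \<rho>0 \<rho>1 :: "'a::euclidean_space \<Rightarrow> real"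
  assumes "radial_density \<rho>0 R0" "radial_density \<rho>1 R1"
  obtains N where "countable N"
    "\<And>s. s \<in> {0<..<1} - N \<Longrightarrow> deriv (\<lambda>s. (1 - t) * height \<rho>0 s + t * height \<rho>1 s) s
      = (1 - t) * height_slope \<rho>0 s + t * height_slope \<rho>1 s"
proof
  interpret \<rho>0: radial_density \<rho>0 R0 by fact
  interpret \<rho>1: radial_density \<rho>1 R1 by fact
  let ?N = "{s \<in> {0<..<1}. \<not> isCont (superlevel_measure \<rho>0) (height \<rho>0 s)} \<union>
    {s \<in> {0<..<1}. \<not> isCont (superlevel_measure \<rho>1) (height \<rho>1 s)}"
  show "countable ?N"
    using \<rho>0.countable_height_jumps \<rho>1.countable_height_jumps by simp
  fix s
  assume "s \<in> {0<..<1} - ?N"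
  then have "((\<lambda>s. (1 - t) * height \<rho>0 s + t * height \<rho>1 s) has_field_derivative
      (1 - t) * height_slope \<rho>0 s + t * height_slope \<rho>1 s) (at s)"
    by (intro DERIV_add DERIV_cmult \<rho>0.height_has_derivative \<rho>1.height_has_derivative) auto
  then show "deriv (\<lambda>s. (1 - t) * height \<rho>0 s + t * height \<rho>1 s) s
      = (1 - t) * height_slope \<rho>0 s + t * height_slope \<rho>1 s"
    by (rule DERIV_imp_deriv)
qed

lemma interp_curve_eq_ball_superposition:
  fixes \<rho>0 \<rho>1 :: "'a::euclidean_space \<Rightarrow> real"
  assumes rd: "radial_density \<rho>0 R0" "radial_density \<rho>1 R1"
  shows "interp_curve \<rho>0 \<rho>1 t = ball_superposition (measure lborel (ball (0::'a) 1)) (-1 / real DIM('a))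
    (\<lambda>s. (1 - t) * height_slope \<rho>0 s + t * height_slope \<rho>1 s)"
proof
  fix x :: 'a
  let ?c = "measure lborel (ball (0::'a) 1)" and ?e = "-1 / real DIM('a)"
  let ?h = "\<lambda>s. (1 - t) * height \<rho>0 s + t * height \<rho>1 s"
  let ?g = "\<lambda>s. (1 - t) * height_slope \<rho>0 s + t * height_slope \<rho>1 s"
  obtain N where N: "countable N" and deriv_eq: "\<And>s. s \<in> {0<..<1} - N \<Longrightarrow> deriv ?h s = ?g s"
    by (rule interpolated_height_deriv_ae[OF rd]) (rule that)
  define G where "G h' s = indicator {0<..<1::real} s *\<^sub>R (indicator (ball 0 ((?c * h' s) powr ?e)) x * h' s)"
    for h' :: "real \<Rightarrow> real" and s
  have "set_integrable lborel {0<..<1::real} ?g"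
    using radial_density.set_integrable_height_slope[OF rd(1)] radial_density.set_integrable_height_slope[OF rd(2)]
    by (intro set_integral_add set_integrable_mult_right) auto
  then have [measurable]: "(\<lambda>s. indicator {0<..<1::real} s * ?g s) \<in> borel_measurable lborel"
    unfolding set_integrable_def by (simp add: borel_measurable_integrable)
  have "G ?g = (\<lambda>s. if norm x < (?c * (indicator {0<..<1::real} s * ?g s)) powr ?e
      then indicator {0<..<1::real} s * ?g s else 0)"
    unfolding G_def by (rule ext) (simp add: indicator_def)
  then have G_meas: "G ?g \<in> borel_measurable lborel"
    by simp
  \<comment> \<open>\<open>deriv\<close> is an arbitrary value where the heights are not differentiable; this happens only on the null set \<open>N\<close>.\<close>
  have eq: "G (deriv ?h) s = G ?g s" if "s \<notin> N" for s
    using deriv_eq[of s] that unfolding G_def by (cases "s \<in> {0<..<1}") auto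
  have "integral\<^sup>L lborel (G (deriv ?h)) = integral\<^sup>L lborel (G ?g)"
  proof (rule integral_cong_AE)
    show "G (deriv ?h) \<in> borel_measurable lborel"
      by (rule measurable_discrete_difference[OF G_meas N]) (auto simp: eq)
    show "AE s in lborel. G (deriv ?h) s = G ?g s"
      using countable_imp_null_set_lborel[OF N] by (rule AE_I') (use eq in auto)
  qed (rule G_meas)
  then show "interp_curve \<rho>0 \<rho>1 t x = ball_superposition ?c ?e ?g x"
    unfolding interp_curve_def ball_superposition_def Let_def set_lebesgue_integral_def G_def by simp
qed

lemma superposition_weight_interpolation:
  fixes \<rho>0 \<rho>1 :: "'a::euclidean_space \<Rightarrow> real"
  assumes "radial_density \<rho>0 R0" "radial_density \<rho>1 R1" and t: "0 < t" "t < 1"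
  shows "superposition_weight (\<lambda>s. (1 - t) * height_slope \<rho>0 s + t * height_slope \<rho>1 s)
    ((1 - t) / measure lborel (ball (0::'a) R0) + t / measure lborel (ball (0::'a) R1))
    (measure lborel (ball (0::'a) 1)) (-1 / real DIM('a))"
proof -
  interpret \<rho>0: radial_density \<rho>0 R0 by fact
  interpret \<rho>1: radial_density \<rho>1 R1 by fact
  show ?thesis
  proof
    show "mono_on {0<..<1} (\<lambda>s. (1 - t) * height_slope \<rho>0 s + t * height_slope \<rho>1 s)"
      using t mono_onD[OF \<rho>0.height_slope_mono] mono_onD[OF \<rho>1.height_slope_mono]
      by (intro mono_onI add_mono mult_left_mono) auto
    show "((\<lambda>s. (1 - t) * height_slope \<rho>0 s + t * height_slope \<rho>1 s) \<longlongrightarrow>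
        (1 - t) / measure lborel (ball (0::'a) R0) + t / measure lborel (ball (0::'a) R1)) (at_right 0)"
      using \<rho>0.height_slope_tendsto_0 \<rho>1.height_slope_tendsto_0 by (auto intro!: tendsto_eq_intros)
    show "0 < (1 - t) / measure lborel (ball (0::'a) R0) + t / measure lborel (ball (0::'a) R1)"
      using t \<rho>0.radius_pos \<rho>1.radius_pos by (intro add_pos_pos divide_pos_pos) (auto simp: content_ball)
    show "set_integrable lborel {0<..<1} (\<lambda>s. (1 - t) * height_slope \<rho>0 s + t * height_slope \<rho>1 s)"
      using \<rho>0.set_integrable_height_slope \<rho>1.set_integrable_height_slope
      by (intro set_integral_add set_integrable_mult_right) auto
  qed (auto simp: content_ball)
qed

lemma supp_interp_curve:
  fixes \<rho>0 \<rho>1 :: "'a::euclidean_space \<Rightarrow> real"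
  assumes rd: "radial_density \<rho>0 R0" "radial_density \<rho>1 R1" and t: "0 < t" "t < 1"
  shows "supp (interp_curve \<rho>0 \<rho>1 t) =
    cball 0 (((1 - t) * R0 powr (- real DIM('a)) + t * R1 powr (- real DIM('a))) powr (-1 / real DIM('a)))"
  unfolding interp_curve_eq_ball_superposition[OF rd]
    superposition_weight.supp_ball_superposition[OF superposition_weight_interpolation[OF rd t]]
    interpolated_support_radius[OF radial_density.radius_pos[OF rd(1)] radial_density.radius_pos[OF rd(2)]] ..

lemma not_bdd_above_scale_add_nonneg:
  fixes f h :: "'b \<Rightarrow> real"
  assumes unbounded: "\<not> bdd_above (f ` A)" and a: "0 < a" and h: "\<And>x. x \<in> A \<Longrightarrow> 0 \<le> h x"
  shows "\<not> bdd_above ((\<lambda>x. a * f x + h x) ` A)"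
proof
  assume "bdd_above ((\<lambda>x. a * f x + h x) ` A)"
  then obtain M where M: "\<forall>x\<in>A. a * f x + h x \<le> M"
    by (auto simp: bdd_above_def)
  have "f x \<le> M / a" if "x \<in> A" for x
  proof -
    have "a * f x \<le> M"
      using M h[OF that] that by fastforce
    then show ?thesis
      using a by (simp add: pos_le_divide_eq mult.commute)
  qed
  then have "bdd_above (f ` A)"
    by (intro bdd_aboveI2)
  with unbounded show False ..
qed

lemma strictly_radially_decreasing_interp_curve:
  fixes \<rho>0 \<rho>1 :: "'a::euclidean_space \<Rightarrow> real"
  assumes rd: "radial_density \<rho>0 R0" "radial_density \<rho>1 R1" and t: "0 < t" "t < 1"
    and strict: "strictly_radially_decreasing_on_supp \<rho>0" "strictly_radially_decreasing_on_supp \<rho>1"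
  shows "strictly_radially_decreasing_on_supp (interp_curve \<rho>0 \<rho>1 t)"
proof -
  interpret \<rho>0: radial_density \<rho>0 R0 by fact
  interpret \<rho>1: radial_density \<rho>1 R1 by fact
  let ?g = "\<lambda>s. (1 - t) * height_slope \<rho>0 s + t * height_slope \<rho>1 s"
  interpret W: superposition_weight ?g
    "(1 - t) / measure lborel (ball (0::'a) R0) + t / measure lborel (ball (0::'a) R1)"
    "measure lborel (ball (0::'a) 1)" "-1 / real DIM('a)"
    by (rule superposition_weight_interpolation[OF rd t])
  have cont: "isCont ?g s" if "0 < s" "s < 1" for s
    using \<rho>0.isCont_height_slope[OF strict(1) that] \<rho>1.isCont_height_slope[OF strict(2) that]
    by (intro continuous_intros)
  have unbounded: "\<not> bdd_above (?g ` {0<..<1})"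
    using \<rho>0.height_slope_unbounded[OF strict(1)] \<rho>1.height_slope_pos t
    by (intro not_bdd_above_scale_add_nonneg) (auto intro: less_imp_le)
  show ?thesis
    unfolding strictly_radially_decreasing_on_supp_def
  proof (intro allI impI)
    fix x y :: 'a
    assume xy: "norm x < norm y" "y \<in> supp (interp_curve \<rho>0 \<rho>1 t)"
    then have "norm y \<le> (measure lborel (ball (0::'a) 1) *
        ((1 - t) / measure lborel (ball (0::'a) R0) + t / measure lborel (ball (0::'a) R1))) powr (-1 / real DIM('a))"
      unfolding interp_curve_eq_ball_superposition[OF rd] W.supp_ball_superposition by simp
    then show "interp_curve \<rho>0 \<rho>1 t y < interp_curve \<rho>0 \<rho>1 t x"
      unfolding interp_curve_eq_ball_superposition[OF rd]
      using W.ball_superposition_strict_antimono[OF cont unbounded xy(1)] by simp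
  qed
qed

lemma continuous_interp_curve:
  fixes \<rho>0 \<rho>1 :: "'a::euclidean_space \<Rightarrow> real"
  assumes rd: "radial_density \<rho>0 R0" "radial_density \<rho>1 R1" and t: "0 < t" "t < 1"
    and cont: "continuous_on UNIV \<rho>0" "continuous_on UNIV \<rho>1"
  shows "continuous_on UNIV (interp_curve \<rho>0 \<rho>1 t)"
  unfolding interp_curve_eq_ball_superposition[OF rd]
proof (rule superposition_weight.continuous_ball_superposition[OF superposition_weight_interpolation[OF rd t]])
  show "strict_mono_on {0<..<1} (\<lambda>s. (1 - t) * height_slope \<rho>0 s + t * height_slope \<rho>1 s)"
    using strict_mono_onD[OF radial_density.height_slope_strict_mono[OF rd(1) cont(1)]]
      strict_mono_onD[OF radial_density.height_slope_strict_mono[OF rd(2) cont(2)]] t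
    by (intro strict_mono_onI add_strict_mono mult_strict_left_mono) auto
qed

theorem lemma4p1:
  fixes \<rho>0 \<rho>1 :: "'a::euclidean_space \<Rightarrow> real"
    and R0 R1 :: real
  assumes pd0: "prob_density \<rho>0" and pd1: "prob_density \<rho>1"
    and lin0: "ess_bounded \<rho>0" and lin1: "ess_bounded \<rho>1"
    and rd0: "radially_decreasing \<rho>0" and rd1: "radially_decreasing \<rho>1"
    and cs0: "compact (supp \<rho>0)" and cs1: "compact (supp \<rho>1)"
    and R0: "supp \<rho>0 = cball 0 R0" and R1: "supp \<rho>1 = cball 0 R1"
  shows
    "(\<forall>t\<in>{0<..<1}. supp (interp_curve \<rho>0 \<rho>1 t) =
        cball 0 (((1 - t) * R0 powr (- real DIM('a)) + t * R1 powr (- real DIM('a)))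
                   powr (-1 / real DIM('a))))
     \<and> (\<forall>t\<in>{0..1}. ((1 - t) * R0 powr (- real DIM('a)) + t * R1 powr (- real DIM('a)))
                   powr (-1 / real DIM('a)) \<le> max R0 R1)
     \<and> (strictly_radially_decreasing_on_supp \<rho>0 \<and> strictly_radially_decreasing_on_supp \<rho>1 \<longrightarrow>
          (\<forall>t\<in>{0<..<1}. strictly_radially_decreasing_on_supp (interp_curve \<rho>0 \<rho>1 t)))
     \<and> (continuous_on UNIV \<rho>0 \<and> continuous_on UNIV \<rho>1 \<longrightarrow>
          (\<forall>t\<in>{0<..<1}. continuous_on UNIV (interp_curve \<rho>0 \<rho>1 t)))"
proof -
  have rd: "radial_density \<rho>0 R0" "radial_density \<rho>1 R1"
    using pd0 rd0 R0 pd1 rd1 R1 by (auto intro: radial_density.intro)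
  show ?thesis
  proof (intro conjI ballI impI)
    show "((1 - t) * R0 powr (- real DIM('a)) + t * R1 powr (- real DIM('a))) powr (-1 / real DIM('a))
        \<le> max R0 R1" if "t \<in> {0..1}" for t
      using that by (intro powr_mean_le_max radial_density.radius_pos[OF rd(1)] radial_density.radius_pos[OF rd(2)]) auto
  qed (use supp_interp_curve[OF rd] strictly_radially_decreasing_interp_curve[OF rd]
      continuous_interp_curve[OF rd] in auto)
qed

end
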